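(* Let $\alpha>0$, $t_0>0$, $x_0,v_0\in\mathcal H$, let $x$ be a solution of the Cauchy problem $$\tfrac{\alpha}{t}\dot x(t)+\operatorname{proj}_{C(x(t))+\ddot x(t)}(0)=0\ (t>t_0),\qquad x(t_0)=x_0,\ \dot x(t_0)=v_0,$$ and let $z\in\mathcal H$. Let $\lambda\ge0$ and $\xi^*=\lambda(\alpha-1-\lambda)\ge0$, and define $$\mathcal E_{\lambda,\xi^*}(t)=t^2\min_{i=1,\dots,m}\big(f_i(x(t))-f_i(z)\big)+\tfrac12\|\lambda(x(t)-z)+t\dot x(t)\|^2+\tfrac{\xi^*}{2}\|x(t)-z\|^2 .$$ Then: (i) $\mathcal E_{\lambda,\xi^*}$ is differentiable at almost every $t\in[t_0,+\infty)$; (ii) for almost all $t\in[t_0,+\infty)$, $$\tfrac{d}{dt}\mathcal E_{\lambda,\xi^*}(t)\le(2-\lambda)t\min_{i}\big(f_i(x(t))-f_i(z)\big)-(\alpha-\lambda-1)t\|\dot x(t)\|^2;$$ (iii) for all $t\in[t_0,+\infty)$, $$\mathcal E_{\lambda,\xi^*}(t)-\mathcal E_{\lambda,\xi^*}(t_0)\le(2-\lambda)\int_{t_0}^t s\min_{i}\big(f_i(x(s))-f_i(z)\big)\,ds+\int_{t_0}^t s(\lambda+1-\alpha)\|\dot x(s)\|^2\,ds .$$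
   Context: $\mathcal H$ is a real Hilbert space. $f_1,\dots,f_m:\mathcal H\to\mathbb R$ are convex and continuously differentiable. $C(x)=\operatorname{co}\{\nabla f_i(x):i=1,\dots,m\}$. For a closed convex $K$, $\operatorname{proj}_K(y)=\arg\min_{w\in K}\|w-y\|^2$. A solution of the Cauchy problem is a function $x:[t_0,+\infty)\to\mathcal H$ such that: $x\in C^1([t_0,+\infty))$; $\dot x$ is absolutely continuous on $[t_0,T]$ for every $T\ge t_0$; there is a Bochner measurable $\ddot x$ with $\dot x(t)=\dot x(t_0)+\int_{t_0}^t\ddot x(s)\,ds$ for all $t$, and $\frac{d}{dt}\dot x=\ddot x$ a.e.; the equation holds for almost all $t\ge t_0$; and the initial conditions hold. *)

theory Defs
  imports "HOL-Analysis.Analysis"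
begin

definition proj :: "'a::real_inner set \<Rightarrow> 'a \<Rightarrow> 'a" where
  "proj K y = (SOME w. w \<in> K \<and> (\<forall>u\<in>K. (norm (w - y))\<^sup>2 \<le> (norm (u - y))\<^sup>2))"

text \<open>C(x) = co { grad f_i(x) : i = 1..m }, indices 0..m-1.\<close>
definition Cgrad :: "nat \<Rightarrow> (nat \<Rightarrow> 'a::real_inner \<Rightarrow> 'a) \<Rightarrow> 'a \<Rightarrow> 'a set" where
  "Cgrad m df x = convex hull ((\<lambda>i. df i x) ` {..<m})"

definition abs_continuous_on :: "real \<Rightarrow> real \<Rightarrow> (real \<Rightarrow> 'a::real_normed_vector) \<Rightarrow> bool" where
  "abs_continuous_on a b g \<longleftrightarrow>
     (\<forall>e>0. \<exists>d>0. \<forall>(n::nat) (l::nat \<Rightarrow> real) (r::nat \<Rightarrow> real).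
        (\<forall>k<n. a \<le> l k \<and> l k \<le> r k \<and> r k \<le> b) \<and>
        (\<forall>k. Suc k < n \<longrightarrow> r k \<le> l (Suc k)) \<and>
        (\<Sum>k<n. r k - l k) < d \<longrightarrow>
        (\<Sum>k<n. norm (g (r k) - g (l k))) < e)"

definition bochner_measurable_on :: "real set \<Rightarrow> (real \<Rightarrow> 'a::real_normed_vector) \<Rightarrow> bool" where
  "bochner_measurable_on S g \<longleftrightarrow>
     (\<exists>\<phi>::nat \<Rightarrow> real \<Rightarrow> 'a.
        (\<forall>n. finite (range (\<phi> n)) \<and> (\<forall>v. \<phi> n -` {v} \<in> sets lebesgue)) \<and>
        (AE t in lebesgue. t \<in> S \<longrightarrow> (\<lambda>n. \<phi> n t) \<longlonglongrightarrow> g t))"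

definition is_solution ::
  "real \<Rightarrow> nat \<Rightarrow> (nat \<Rightarrow> 'a::{real_inner,complete_space} \<Rightarrow> 'a) \<Rightarrow> real \<Rightarrow> 'a \<Rightarrow> 'a
   \<Rightarrow> (real \<Rightarrow> 'a) \<Rightarrow> (real \<Rightarrow> 'a) \<Rightarrow> (real \<Rightarrow> 'a) \<Rightarrow> bool" where
  "is_solution \<alpha> m df t0 x0 v0 x xd xdd \<longleftrightarrow>
     (\<forall>t\<ge>t0. (x has_vector_derivative xd t) (at t within {t0..})) \<and>
     continuous_on {t0..} xd \<and>
     (\<forall>T\<ge>t0. abs_continuous_on t0 T xd) \<and>
     bochner_measurable_on {t0..} xdd \<and>
     (\<forall>t\<ge>t0. (\<lambda>s. norm (xdd s)) integrable_on {t0..t} \<and>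
              (xdd has_integral (xd t - xd t0)) {t0..t}) \<and>
     (AE t in lborel. t \<ge> t0 \<longrightarrow> (xd has_vector_derivative xdd t) (at t)) \<and>
     (AE t in lborel. t > t0 \<longrightarrow>
        (\<alpha> / t) *\<^sub>R xd t + proj ((\<lambda>c. c + xdd t) ` Cgrad m df (x t)) 0 = 0) \<and>
     x t0 = x0 \<and> xd t0 = v0"

definition energy ::
  "nat \<Rightarrow> (nat \<Rightarrow> 'a::real_inner \<Rightarrow> real) \<Rightarrow> (real \<Rightarrow> 'a) \<Rightarrow> (real \<Rightarrow> 'a) \<Rightarrow> 'a \<Rightarrow> real \<Rightarrow> real \<Rightarrow> real \<Rightarrow> real" where
  "energy m f x xd z lam \<xi> t =
     t\<^sup>2 * Min ((\<lambda>i. f i (x t) - f i z) ` {..<m})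
     + 1/2 * (norm (lam *\<^sub>R (x t - z) + t *\<^sub>R xd t))\<^sup>2
     + \<xi>/2 * (norm (x t - z))\<^sup>2"

end

theory Submission
  imports Defs
begin

(* Along a solution the acceleration splits as xdd = -(alpha/t) xd - c with c in C(x) and
   <xd, c' - c> <= 0 for all c' in C(x): this is the variational characterisation of the
   projection of 0 onto C(x) + xdd. Off the countable set of times at which two objectives
   cross with different slopes, phi(t) = min_i (f_i(x t) - f_i z) is differentiable with the
   derivative <grad f_k(x), xd> <= <xd, c> of an active index k, and convexity gives
   phi <= <x - z, c>. In the derivative of the energy the choice xi = lambda (alpha - 1 - lambda)
   cancels the cross term <x - z, xd>, and these two inequalities give (ii).
   For (iii), the energy minus the integral of the right-hand side has increments bounded by
   integrals of a fixed integrable function and an a.e. nonpositive derivative; a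
   Henstock-gauge argument shows that such a function is nonincreasing. *)

section \<open>Functions with integrably dominated increments\<close>

lemma continuous_on_Icc_norm_bound:
  fixes P :: "real \<Rightarrow> 'b::real_normed_vector"
  assumes "continuous_on {a..b} P"
  obtains B where "B \<ge> 0" "\<And>s. s \<in> {a..b} \<Longrightarrow> norm (P s) \<le> B"
proof -
  obtain B where "B > 0" "\<forall>y\<in>P ` {a..b}. norm y \<le> B"
    using compact_imp_bounded[OF compact_continuous_image[OF assms compact_Icc]] bounded_pos by metis
  then show ?thesis using that[of B] by auto
qed

text \<open>A quantitative form of absolute continuity: the velocity of a solution has it with bound
  \<open>norm xdd\<close>, and unlike the \<open>\<epsilon>\<close>-\<open>\<delta>\<close> form it is visibly preserved by bounded bilinear products.\<close>

definition increments_dominated_on :: "real \<Rightarrow> real \<Rightarrow> (real \<Rightarrow> 'b::real_normed_vector) \<Rightarrow> bool" where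
  "increments_dominated_on a b P \<longleftrightarrow> (\<exists>w. w integrable_on {a..b} \<and>
     (\<forall>u v. a \<le> u \<longrightarrow> u \<le> v \<longrightarrow> v \<le> b \<longrightarrow> norm (P v - P u) \<le> integral {u..v} w))"

lemma increments_dominated_onI:
  assumes "w integrable_on {a..b}"
    and "\<And>u v. a \<le> u \<Longrightarrow> u \<le> v \<Longrightarrow> v \<le> b \<Longrightarrow> norm (P v - P u) \<le> integral {u..v} w"
  shows "increments_dominated_on a b P"
  using assms unfolding increments_dominated_on_def by blast

lemma increments_dominated_onE:
  assumes "increments_dominated_on a b P"
  obtains w where "w integrable_on {a..b}"
    "\<And>u v. a \<le> u \<Longrightarrow> u \<le> v \<Longrightarrow> v \<le> b \<Longrightarrow> norm (P v - P u) \<le> integral {u..v} w"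
  using assms unfolding increments_dominated_on_def by blast

lemma increments_dominated_on_lipschitz:
  assumes "\<And>u v. a \<le> u \<Longrightarrow> u \<le> v \<Longrightarrow> v \<le> b \<Longrightarrow> norm (P v - P u) \<le> L * (v - u)"
  shows "increments_dominated_on a b P"
  by (rule increments_dominated_onI[of "\<lambda>_. L"]) (use assms in \<open>auto simp: mult.commute\<close>)

lemma increments_dominated_on_add:
  assumes "increments_dominated_on a b P" "increments_dominated_on a b Q"
  shows "increments_dominated_on a b (\<lambda>s. P s + Q s)"
proof -
  obtain w1 w2 where w1: "w1 integrable_on {a..b}"
      "\<And>u v. a \<le> u \<Longrightarrow> u \<le> v \<Longrightarrow> v \<le> b \<Longrightarrow> norm (P v - P u) \<le> integral {u..v} w1"
    and w2: "w2 integrable_on {a..b}"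
      "\<And>u v. a \<le> u \<Longrightarrow> u \<le> v \<Longrightarrow> v \<le> b \<Longrightarrow> norm (Q v - Q u) \<le> integral {u..v} w2"
    using assms by (metis increments_dominated_onE)
  show ?thesis
  proof (rule increments_dominated_onI[of "\<lambda>s. w1 s + w2 s"])
    fix u v assume uv: "a \<le> u" "u \<le> v" "v \<le> b"
    have "norm (P v + Q v - (P u + Q u)) \<le> norm (P v - P u) + norm (Q v - Q u)"
      by (metis add_diff_add norm_triangle_ineq)
    also have "\<dots> \<le> integral {u..v} w1 + integral {u..v} w2"
      using w1(2)[OF uv] w2(2)[OF uv] by simp
    also have "\<dots> = integral {u..v} (\<lambda>s. w1 s + w2 s)"
      using uv by (intro integral_add[symmetric] integrable_subinterval_real[OF w1(1)]
          integrable_subinterval_real[OF w2(1)]) auto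
    finally show "norm (P v + Q v - (P u + Q u)) \<le> integral {u..v} (\<lambda>s. w1 s + w2 s)" .
  qed (rule integrable_add[OF w1(1) w2(1)])
qed

lemma increments_dominated_on_linear:
  assumes L: "bounded_linear L" and P: "increments_dominated_on a b P"
  shows "increments_dominated_on a b (\<lambda>s. L (P s))"
proof -
  obtain K where K: "\<And>y. norm (L y) \<le> norm y * K"
    using bounded_linear.bounded[OF L] by blast
  obtain w where w: "w integrable_on {a..b}"
      "\<And>u v. a \<le> u \<Longrightarrow> u \<le> v \<Longrightarrow> v \<le> b \<Longrightarrow> norm (P v - P u) \<le> integral {u..v} w"
    using increments_dominated_onE[OF P] by blast
  show ?thesis
  proof (rule increments_dominated_onI[of "\<lambda>s. \<bar>K\<bar> * w s"])
    fix u v assume uv: "a \<le> u" "u \<le> v" "v \<le> b"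
    have "norm (L (P v) - L (P u)) \<le> norm (P v - P u) * \<bar>K\<bar>"
      using K[of "P v - P u"] by (simp add: linear_diff[OF bounded_linear.linear[OF L]])
        (meson abs_ge_self mult_left_mono norm_ge_zero order_trans)
    also have "\<dots> \<le> \<bar>K\<bar> * integral {u..v} w"
      using w(2)[OF uv] by (simp add: mult.commute mult_left_mono)
    finally show "norm (L (P v) - L (P u)) \<le> integral {u..v} (\<lambda>s. \<bar>K\<bar> * w s)"
      by simp
  qed (intro integrable_on_mult_right w(1))
qed

lemma increments_dominated_on_diff:
  assumes "increments_dominated_on a b P" "increments_dominated_on a b Q"
  shows "increments_dominated_on a b (\<lambda>s. P s - Q s)"
  using increments_dominated_on_add[OF assms(1)
      increments_dominated_on_linear[OF bounded_linear_minus[OF bounded_linear_ident] assms(2)]]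
  by simp

lemma increments_dominated_on_imp_continuous_on:
  assumes "increments_dominated_on a b P"
  shows "continuous_on {a..b} P"
proof -
  obtain w where w: "w integrable_on {a..b}"
      and w_dom: "\<And>u v. a \<le> u \<Longrightarrow> u \<le> v \<Longrightarrow> v \<le> b \<Longrightarrow> norm (P v - P u) \<le> integral {u..v} w"
    using increments_dominated_onE[OF assms] by blast
  define W where "W t = integral {a..t} w" for t
  have dist_le: "dist (P v) (P u) \<le> dist (W v) (W u)" if "u \<in> {a..b}" "v \<in> {a..b}" for u v
  proof -
    have ordered: "dist (P v) (P u) \<le> \<bar>W v - W u\<bar>" if uv: "a \<le> u" "u \<le> v" "v \<le> b" for u v
    proof -
      have "W u + integral {u..v} w = W v"
        unfolding W_def using uv by (intro Henstock_Kurzweil_Integration.integral_combine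
            integrable_subinterval_real[OF w]) auto
      then show ?thesis using w_dom[OF uv] by (simp add: dist_norm)
    qed
    show ?thesis
    proof (cases "u \<le> v")
      case True
      then show ?thesis using ordered[of u v] that by (simp add: dist_real_def)
    next
      case False
      then show ?thesis using ordered[of v u] that by (simp add: dist_real_def dist_commute abs_minus_commute)
    qed
  qed
  have "continuous_on {a..b} W" unfolding W_def by (rule indefinite_integral_continuous_1[OF w])
  then show ?thesis
    unfolding continuous_on_iff by (meson dist_le le_less_trans)
qed

lemma increments_dominated_on_bilinear:
  fixes prod :: "'b::real_normed_vector \<Rightarrow> 'c::real_normed_vector \<Rightarrow> 'd::real_normed_vector"
  assumes prod: "bounded_bilinear prod"
    and P: "increments_dominated_on a b P" and Q: "increments_dominated_on a b Q"
  shows "increments_dominated_on a b (\<lambda>s. prod (P s) (Q s))"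
proof -
  obtain K where K: "K \<ge> 0" "\<And>x y. norm (prod x y) \<le> norm x * norm y * K"
    using bounded_bilinear.nonneg_bounded[OF prod] by blast
  obtain BP where BP: "BP \<ge> 0" "\<And>s. s \<in> {a..b} \<Longrightarrow> norm (P s) \<le> BP"
    using continuous_on_Icc_norm_bound[OF increments_dominated_on_imp_continuous_on[OF P]] by blast
  obtain BQ where BQ: "BQ \<ge> 0" "\<And>s. s \<in> {a..b} \<Longrightarrow> norm (Q s) \<le> BQ"
    using continuous_on_Icc_norm_bound[OF increments_dominated_on_imp_continuous_on[OF Q]] by blast
  obtain wP where wP: "wP integrable_on {a..b}"
      "\<And>u v. a \<le> u \<Longrightarrow> u \<le> v \<Longrightarrow> v \<le> b \<Longrightarrow> norm (P v - P u) \<le> integral {u..v} wP"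
    using increments_dominated_onE[OF P] by blast
  obtain wQ where wQ: "wQ integrable_on {a..b}"
      "\<And>u v. a \<le> u \<Longrightarrow> u \<le> v \<Longrightarrow> v \<le> b \<Longrightarrow> norm (Q v - Q u) \<le> integral {u..v} wQ"
    using increments_dominated_onE[OF Q] by blast
  show ?thesis
  proof (rule increments_dominated_onI[of "\<lambda>s. K * BP * wQ s + K * BQ * wP s"])
    fix u v assume uv: "a \<le> u" "u \<le> v" "v \<le> b"
    have int_nonneg: "0 \<le> integral {u..v} wP" "0 \<le> integral {u..v} wQ"
      using wP(2)[OF uv] wQ(2)[OF uv] norm_ge_zero order_trans by meson+
    have "prod (P v) (Q v) - prod (P u) (Q u) = prod (P v) (Q v - Q u) + prod (P v - P u) (Q u)"
      by (simp add: bounded_bilinear.diff_left[OF prod] bounded_bilinear.diff_right[OF prod])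
    then have "norm (prod (P v) (Q v) - prod (P u) (Q u))
        \<le> norm (P v) * norm (Q v - Q u) * K + norm (P v - P u) * norm (Q u) * K"
      using norm_triangle_ineq[of "prod (P v) (Q v - Q u)" "prod (P v - P u) (Q u)"]
        K(2)[of "P v" "Q v - Q u"] K(2)[of "P v - P u" "Q u"] by simp
    also have "\<dots> \<le> BP * integral {u..v} wQ * K + integral {u..v} wP * BQ * K"
      using uv K(1) BP BQ wP(2)[OF uv] wQ(2)[OF uv] int_nonneg
      by (intro add_mono mult_right_mono mult_mono) auto
    also have "\<dots> = integral {u..v} (\<lambda>s. K * BP * wQ s + K * BQ * wP s)"
    proof -
      have "wP integrable_on {u..v}" "wQ integrable_on {u..v}"
        using uv by (auto intro: integrable_subinterval_real[OF wP(1)] integrable_subinterval_real[OF wQ(1)])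
      then show ?thesis
        by (simp add: integral_add integrable_on_mult_right algebra_simps)
    qed
    finally show "norm (prod (P v) (Q v) - prod (P u) (Q u))
        \<le> integral {u..v} (\<lambda>s. K * BP * wQ s + K * BQ * wP s)" .
  qed (intro integrable_add integrable_on_mult_right wP(1) wQ(1))
qed

lemma increments_dominated_on_integral:
  fixes P :: "real \<Rightarrow> 'b::real_inner"
  assumes P': "\<And>t. t \<in> {a..b} \<Longrightarrow> (P' has_integral (P t - P a)) {a..t}"
    and norm_P': "(\<lambda>s. norm (P' s)) integrable_on {a..b}"
  shows "increments_dominated_on a b P"
proof (rule increments_dominated_onI[OF norm_P'])
  fix u v assume uv: "a \<le> u" "u \<le> v" "v \<le> b"
  show "norm (P v - P u) \<le> integral {u..v} (\<lambda>s. norm (P' s))"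
  proof (cases "P v = P u")
    case True
    then show ?thesis
      using uv by (simp add: integral_nonneg integrable_subinterval_real[OF norm_P'])
  next
    case False
    \<comment> \<open>The library bound on the norm of an integral needs a \<open>banach\<close> codomain, so we pass
      to the scalar integrand along the direction of the increment.\<close>
    define e where "e = (P v - P u) /\<^sub>R norm (P v - P u)"
    have e_P': "((\<lambda>s. e \<bullet> P' s) has_integral e \<bullet> (P t - P a)) {a..t}" if "t \<in> {a..b}" for t
      using has_integral_linear[OF P'[OF that] bounded_linear_inner_right[of e]] by (simp add: o_def)
    have int_v: "(\<lambda>s. e \<bullet> P' s) integrable_on {a..v}" using e_P'[of v] uv by auto
    have "integral {a..u} (\<lambda>s. e \<bullet> P' s) + integral {u..v} (\<lambda>s. e \<bullet> P' s)
        = integral {a..v} (\<lambda>s. e \<bullet> P' s)"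
      by (rule Henstock_Kurzweil_Integration.integral_combine) (use uv int_v in auto)
    then have "integral {u..v} (\<lambda>s. e \<bullet> P' s) = e \<bullet> (P v - P u)"
      using integral_unique[OF e_P'[of u]] integral_unique[OF e_P'[of v]] uv
      by (simp add: inner_diff_right)
    moreover have "e \<bullet> (P v - P u) = norm (P v - P u)"
      using False by (simp add: e_def dot_square_norm power2_eq_square)
    ultimately have "norm (P v - P u) = integral {u..v} (\<lambda>s. e \<bullet> P' s)"
      by simp
    also have "\<dots> \<le> integral {u..v} (\<lambda>s. norm (P' s))"
    proof (rule integral_le)
      show "(\<lambda>s. e \<bullet> P' s) integrable_on {u..v}"
        using uv by (intro integrable_subinterval_real[OF int_v]) auto
      show "(\<lambda>s. norm (P' s)) integrable_on {u..v}"
        using uv by (intro integrable_subinterval_real[OF norm_P']) auto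
      show "e \<bullet> P' s \<le> norm (P' s)" for s
        using norm_cauchy_schwarz[of e "P' s"] False by (simp add: e_def)
    qed
    finally show ?thesis .
  qed
qed

lemma increments_dominated_on_vector_derivative:
  assumes P': "\<And>s. s \<in> {a..b} \<Longrightarrow> (P has_vector_derivative P' s) (at s within {a..b})"
    and cont: "continuous_on {a..b} P'"
  shows "increments_dominated_on a b P"
proof -
  obtain B where B: "\<And>s. s \<in> {a..b} \<Longrightarrow> norm (P' s) \<le> B"
    using continuous_on_Icc_norm_bound[OF cont] by blast
  show ?thesis
  proof (rule increments_dominated_on_lipschitz)
    fix u v assume uv: "a \<le> u" "u \<le> v" "v \<le> b"
    have "norm (P v - P u) \<le> B * norm (v - u)"
    proof (rule differentiable_bound[of "{a..b}" P "\<lambda>s h. h *\<^sub>R P' s"])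
      show "(P has_derivative (\<lambda>h. h *\<^sub>R P' s)) (at s within {a..b})" if "s \<in> {a..b}" for s
        using P'[OF that] by (simp add: has_vector_derivative_def)
      show "onorm (\<lambda>h. h *\<^sub>R P' s) \<le> B" if "s \<in> {a..b}" for s
      proof (rule onorm_le)
        show "norm (h *\<^sub>R P' s) \<le> B * norm h" for h
          using mult_right_mono[OF B[OF that] abs_ge_zero[of h]] by (simp add: mult.commute)
      qed
    qed (use uv in auto)
    then show "norm (P v - P u) \<le> B * (v - u)" using uv by simp
  qed
qed

lemma increments_dominated_on_norm:
  assumes "increments_dominated_on a b P"
  shows "increments_dominated_on a b (\<lambda>s. norm (P s))"
  using assms norm_triangle_ineq3 order_trans
  unfolding increments_dominated_on_def real_norm_def by meson

lemma increments_dominated_on_min: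
  fixes P Q :: "real \<Rightarrow> real"
  assumes "increments_dominated_on a b P" "increments_dominated_on a b Q"
  shows "increments_dominated_on a b (\<lambda>s. min (P s) (Q s))"
proof -
  have min_eq: "min p q = (p + q - norm (p - q)) / 2" for p q :: real
    by (simp add: min_def)
  show ?thesis
    unfolding min_eq using assms
    by (intro increments_dominated_on_linear[OF bounded_linear_divide] increments_dominated_on_diff
        increments_dominated_on_add increments_dominated_on_norm)
qed

lemma increments_dominated_on_Min:
  fixes g :: "'i \<Rightarrow> real \<Rightarrow> real"
  assumes "finite I" "I \<noteq> {}" "\<And>i. i \<in> I \<Longrightarrow> increments_dominated_on a b (g i)"
  shows "increments_dominated_on a b (\<lambda>s. Min ((\<lambda>i. g i s) ` I))"
  using assms
proof (induction I rule: finite_ne_induct)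
  case (insert i I)
  then show ?case by (simp add: increments_dominated_on_min)
qed simp

lemma DERIV_nonpos_local_increment_bound:
  fixes H :: "real \<Rightarrow> real"
  assumes der: "\<And>s. s \<in> S - N \<Longrightarrow> \<exists>D\<le>0. (H has_real_derivative D) (at s within S)" and "e > 0"
  obtains d where "\<And>s. d s > 0"
    "\<And>s u v. s \<in> S - N \<Longrightarrow> u \<in> S \<Longrightarrow> v \<in> S \<Longrightarrow> u \<le> s \<Longrightarrow> s \<le> v \<Longrightarrow> s - u < d s \<Longrightarrow> v - s < d s
      \<Longrightarrow> H v - H u \<le> e * (v - u)"
proof -
  have "\<exists>d>0. \<forall>u\<in>S. \<forall>v\<in>S. u \<le> s \<longrightarrow> s \<le> v \<longrightarrow> s - u < d \<longrightarrow> v - s < d \<longrightarrow> H v - H u \<le> e * (v - u)"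
    if s: "s \<in> S - N" for s
  proof -
    obtain D where "D \<le> 0" "(H has_real_derivative D) (at s within S)" using der[OF s] by blast
    then obtain d where "d > 0"
        and d: "\<And>y. y \<in> S \<Longrightarrow> \<bar>y - s\<bar> < d \<Longrightarrow> \<bar>H y - H s - D * (y - s)\<bar> \<le> e * \<bar>y - s\<bar>"
      using \<open>e > 0\<close> unfolding has_field_derivative_def has_derivative_within_alt by (metis real_norm_def)
    have "H v - H u \<le> e * (v - u)"
      if "u \<in> S" "v \<in> S" "u \<le> s" "s \<le> v" "s - u < d" "v - s < d" for u v
    proof -
      have "H v - H s \<le> e * (v - s)"
        using d[of v] that \<open>D \<le> 0\<close> mult_nonpos_nonneg[of D "v - s"] by auto
      moreover have "H s - H u \<le> e * (s - u)"
        using d[of u] that \<open>D \<le> 0\<close> mult_nonpos_nonpos[of D "u - s"] by auto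
      ultimately show ?thesis by (simp add: algebra_simps)
    qed
    then show ?thesis using \<open>d > 0\<close> by blast
  qed
  then obtain d where d: "\<And>s. s \<in> S - N \<Longrightarrow> d s > 0 \<and> (\<forall>u\<in>S. \<forall>v\<in>S.
      u \<le> s \<longrightarrow> s \<le> v \<longrightarrow> s - u < d s \<longrightarrow> v - s < d s \<longrightarrow> H v - H u \<le> e * (v - u))"
    by metis
  show ?thesis
    by (rule that[of "\<lambda>s. if s \<in> S - N then d s else 1"]) (use d in auto)
qed

lemma negligible_tags_integral_small:
  fixes w :: "real \<Rightarrow> real"
  assumes N: "negligible N" and w: "w integrable_on {a..b}" and "e > 0"
  obtains \<gamma> where "gauge \<gamma>"
    "\<And>p. p tagged_division_of {a..b} \<Longrightarrow> \<gamma> fine p \<Longrightarrow>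
       (\<Sum>(x,K)\<in>p. if x \<in> N then integral K w else 0) \<le> e"
proof -
  let ?wN = "\<lambda>x. if x \<in> N then w x else 0"
  have "(?wN has_integral 0) (cbox a b)" by (rule has_integral_negligible_cbox[OF N]) auto
  then obtain \<gamma>1 where \<gamma>1: "gauge \<gamma>1" "\<And>p. p tagged_division_of cbox a b \<Longrightarrow> \<gamma>1 fine p \<Longrightarrow>
      norm ((\<Sum>(x,K)\<in>p. measure lborel K *\<^sub>R ?wN x) - 0) < e / 2"
    using \<open>e > 0\<close> unfolding has_integral by (meson half_gt_zero)
  obtain \<gamma>2 where \<gamma>2: "gauge \<gamma>2" "\<And>p. p tagged_partial_division_of cbox a b \<Longrightarrow> \<gamma>2 fine p \<Longrightarrow>
      (\<Sum>(x,K)\<in>p. norm (measure lborel K *\<^sub>R w x - integral K w)) < e / 2"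
    using Henstock_lemma[of w a b "e / 2"] w \<open>e > 0\<close> by (auto simp: box_real)
  show ?thesis
  proof (rule that[of "\<lambda>x. \<gamma>1 x \<inter> \<gamma>2 x"])
    show "gauge (\<lambda>x. \<gamma>1 x \<inter> \<gamma>2 x)" using \<gamma>1(1) \<gamma>2(1) by (rule gauge_Int)
    fix p assume p: "p tagged_division_of {a..b}" and fine: "(\<lambda>x. \<gamma>1 x \<inter> \<gamma>2 x) fine p"
    let ?pN = "{(x,K) \<in> p. x \<in> N}"
    have "(\<Sum>(x,K)\<in>p. if x \<in> N then integral K w else 0)
        \<le> (\<Sum>(x,K)\<in>p. measure lborel K * ?wN x) + (\<Sum>(x,K)\<in>?pN. norm (measure lborel K *\<^sub>R w x - integral K w))"
      using tagged_division_of_finite[OF p]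
      by (simp add: sum.inter_filter split_def sum.distrib[symmetric] abs_if)
        (intro sum_mono, auto simp: mult.commute)
    also have "\<dots> < e / 2 + e / 2"
    proof (intro add_strict_mono)
      show "(\<Sum>(x,K)\<in>p. measure lborel K * ?wN x) < e / 2"
        using \<gamma>1(2)[of p] p fine by (simp add: box_real fine_Int)
      have "?pN tagged_partial_division_of cbox a b"
        using p by (auto simp: box_real tagged_division_of_def intro: tagged_partial_division_subset)
      moreover have "\<gamma>2 fine ?pN" using fine by (auto simp: fine_def)
      ultimately show "(\<Sum>(x,K)\<in>?pN. norm (measure lborel K *\<^sub>R w x - integral K w)) < e / 2"
        by (rule \<gamma>2(2))
    qed
    finally show "(\<Sum>(x,K)\<in>p. if x \<in> N then integral K w else 0) \<le> e" by simp
  qed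
qed

lemma DERIV_nonpos_ae_increment_le:
  fixes H :: "real \<Rightarrow> real"
  assumes "a \<le> b" and dom: "increments_dominated_on a b H" and N: "negligible N"
    and der: "\<And>s. s \<in> {a..b} - N \<Longrightarrow> \<exists>D\<le>0. (H has_real_derivative D) (at s within {a..b})"
    and "e > 0"
  shows "H b - H a \<le> e * (b - a + 1)"
proof -
  obtain w where w: "w integrable_on {a..b}"
      and w_dom: "\<And>u v. a \<le> u \<Longrightarrow> u \<le> v \<Longrightarrow> v \<le> b \<Longrightarrow> norm (H v - H u) \<le> integral {u..v} w"
    using increments_dominated_onE[OF dom] by blast
  obtain \<gamma> where \<gamma>: "gauge \<gamma>" "\<And>p. p tagged_division_of {a..b} \<Longrightarrow> \<gamma> fine p \<Longrightarrow>
      (\<Sum>(x,K)\<in>p. if x \<in> N then integral K w else 0) \<le> e"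
    using negligible_tags_integral_small[OF N w \<open>e > 0\<close>] by blast
  obtain d where d_pos: "\<And>s. d s > 0" and d: "\<And>s u v. s \<in> {a..b} - N \<Longrightarrow> u \<in> {a..b} \<Longrightarrow> v \<in> {a..b}
      \<Longrightarrow> u \<le> s \<Longrightarrow> s \<le> v \<Longrightarrow> s - u < d s \<Longrightarrow> v - s < d s \<Longrightarrow> H v - H u \<le> e * (v - u)"
    using DERIV_nonpos_local_increment_bound[OF der \<open>e > 0\<close>] by blast
  obtain p where p: "p tagged_division_of {a..b}" and fine: "(\<lambda>s. \<gamma> s \<inter> ball s (d s)) fine p"
    using fine_division_exists_real[OF gauge_Int[OF \<gamma>(1) gauge_ball_dependent]] d_pos by blast
  have tag_bound: "H (Sup K) - H (Inf K) \<le> (if x \<in> N then integral K w else 0) + e * measure lborel K"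
    if xK: "(x, K) \<in> p" for x K
  proof -
    obtain u v where K: "K = {u..v}" "u \<le> x" "x \<le> v" "a \<le> u" "v \<le> b" "K \<subseteq> ball x (d x)"
      using tagged_division_ofD(2-4)[OF p xK] fine xK by (fastforce simp: fine_def box_real)
    have "H v - H u \<le> (if x \<in> N then integral {u..v} w else e * (v - u))"
    proof (cases "x \<in> N")
      case False
      have "u \<in> ball x (d x)" "v \<in> ball x (d x)"
        using K(1-3) subsetD[OF K(6), of u] subsetD[OF K(6), of v] by simp_all
      then show ?thesis using d[of x u v] K False by (auto simp: dist_real_def)
    qed (use w_dom[of u v] K in auto)
    moreover have "0 \<le> e * (v - u)" using \<open>e > 0\<close> K by simp
    ultimately show ?thesis using K by auto
  qed
  have "H b - H a = (\<Sum>(x,K)\<in>p. H (Sup K) - H (Inf K))"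
    using additive_tagged_division_1[OF \<open>a \<le> b\<close> p, of H] by simp
  also have "\<dots> \<le> (\<Sum>(x,K)\<in>p. if x \<in> N then integral K w else 0) + e * (\<Sum>(x,K)\<in>p. measure lborel K)"
    using tag_bound by (simp add: sum.distrib[symmetric] sum_distrib_left split_def sum_mono)
  also have "\<dots> \<le> e + e * (b - a)"
    using \<gamma>(2)[OF p] fine additive_content_tagged_division[OF p[folded box_real(2)]] \<open>a \<le> b\<close>
    by (simp add: fine_Int)
  finally show ?thesis by (simp add: algebra_simps)
qed

lemma DERIV_nonpos_ae_imp_decreasing:
  fixes H :: "real \<Rightarrow> real"
  assumes "a \<le> b" "increments_dominated_on a b H" "negligible N"
    and "\<And>s. s \<in> {a..b} - N \<Longrightarrow> \<exists>D\<le>0. (H has_real_derivative D) (at s within {a..b})"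
  shows "H b \<le> H a"
proof -
  have "H b - H a \<le> 0 + \<epsilon>" if "\<epsilon> > 0" for \<epsilon>
    using DERIV_nonpos_ae_increment_le[OF assms, of "\<epsilon> / (b - a + 1)"] that \<open>a \<le> b\<close> by simp
  then show ?thesis using field_le_epsilon[of "H b - H a" 0] by simp
qed

lemma AE_lborel_imp_negligible:
  assumes "AE s in lborel. P s"
  obtains N where "negligible N" "\<And>s. \<not> P s \<Longrightarrow> s \<in> N"
proof -
  have "\<exists>N. negligible N \<and> {s. \<not> P s} \<subseteq> N"
    using AE_completion[OF assms] by (simp only: eventually_ae_filter_negligible)
  then show ?thesis using that by blast
qed

lemma DERIV_le_ae_imp_increment_le:
  fixes H R :: "real \<Rightarrow> real"
  assumes "a \<le> b" and dom: "increments_dominated_on a b H" and R: "continuous_on {a..b} R"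
    and der: "AE s in lborel. s \<in> {a..b} \<longrightarrow> (\<exists>D. (H has_real_derivative D) (at s) \<and> D \<le> R s)"
  shows "H b - H a \<le> integral {a..b} R"
proof -
  define Q where "Q r = integral {a..r} R" for r
  have Q: "(Q has_vector_derivative R s) (at s within {a..b})" if "s \<in> {a..b}" for s
    unfolding Q_def by (rule integral_has_vector_derivative[OF R that])
  obtain N where N: "negligible N"
    and good: "\<And>s. \<not> (s \<in> {a..b} \<longrightarrow> (\<exists>D. (H has_real_derivative D) (at s) \<and> D \<le> R s)) \<Longrightarrow> s \<in> N"
    using AE_lborel_imp_negligible[OF der] by metis
  have "H b - Q b \<le> H a - Q a"
  proof (rule DERIV_nonpos_ae_imp_decreasing[OF \<open>a \<le> b\<close> _ N])
    show "increments_dominated_on a b (\<lambda>r. H r - Q r)"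
      by (intro increments_dominated_on_diff dom increments_dominated_on_vector_derivative[OF Q R])
    fix s assume s: "s \<in> {a..b} - N"
    then obtain D where D: "(H has_real_derivative D) (at s)" "D \<le> R s" using good by blast
    have "((\<lambda>r. H r - Q r) has_real_derivative D - R s) (at s within {a..b})"
      using Q[of s] s by (intro DERIV_diff has_field_derivative_at_within[OF D(1)])
        (auto simp: has_real_derivative_iff_has_vector_derivative)
    then show "\<exists>D\<le>0. ((\<lambda>r. H r - Q r) has_real_derivative D) (at s within {a..b})"
      using D(2) by (intro exI[of _ "D - R s"]) simp
  qed
  then show ?thesis by (simp add: Q_def)
qed

section \<open>Minima of finitely many differentiable functions\<close>

lemma DERIV_abs_at_zero:
  fixes h :: "real \<Rightarrow> real"
  assumes "(h has_real_derivative 0) (at t)" "h t = 0"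
  shows "((\<lambda>s. \<bar>h s\<bar>) has_real_derivative 0) (at t)"
proof -
  have "((\<lambda>y. \<bar>(h y - h t) / (y - t)\<bar>) \<longlongrightarrow> 0) (at t)"
    using assms(1) by (simp only: has_field_derivative_iff tendsto_rabs_zero_iff)
  moreover have "(\<lambda>y. \<bar>(h y - h t) / (y - t)\<bar>) = (\<lambda>y. \<bar>(\<bar>h y\<bar> - \<bar>h t\<bar>) / (y - t)\<bar>)"
    using assms(2) by (simp add: abs_divide)
  ultimately show ?thesis
    by (simp only: has_field_derivative_iff tendsto_rabs_zero_iff)
qed

lemma DERIV_Min_common:
  fixes g :: "'i \<Rightarrow> real \<Rightarrow> real"
  assumes "finite A" "A \<noteq> {}"
    and "\<And>i. i \<in> A \<Longrightarrow> (g i has_real_derivative D) (at t)" "\<And>i. i \<in> A \<Longrightarrow> g i t = c"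
  shows "((\<lambda>s. Min ((\<lambda>i. g i s) ` A)) has_real_derivative D) (at t)"
  using assms
proof (induction A rule: finite_ne_induct)
  case (insert a A)
  let ?M = "\<lambda>s. Min ((\<lambda>i. g i s) ` A)"
  have M: "(?M has_real_derivative D) (at t)" "?M t = c"
    using insert by (auto simp: image_constant_conv)
  have ga: "(g a has_real_derivative D) (at t)" "g a t = c" using insert by auto
  have "min p q = (p + q - \<bar>p - q\<bar>) / 2" for p q :: real by (simp add: min_def)
  then have min_eq: "Min ((\<lambda>i. g i s) ` insert a A) = (g a s + ?M s - \<bar>g a s - ?M s\<bar>) / 2" for s
    using insert by simp
  have "((\<lambda>s. \<bar>g a s - ?M s\<bar>) has_real_derivative 0) (at t)"
    using DERIV_diff[OF ga(1) M(1)] by (intro DERIV_abs_at_zero) (simp_all add: ga M)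
  then have "((\<lambda>s. (g a s + ?M s - \<bar>g a s - ?M s\<bar>) / 2) has_real_derivative (D + D - 0) / 2) (at t)"
    by (intro DERIV_cdivide DERIV_diff DERIV_add ga(1) M(1))
  then show ?case by (simp only: min_eq) simp
qed simp

lemma eventually_Min_eq_Min_active:
  fixes g :: "'i \<Rightarrow> real \<Rightarrow> real"
  assumes I: "finite I" "k \<in> I" and cont: "\<And>i. i \<in> I \<Longrightarrow> isCont (g i) t"
    and k_min: "g k t = Min ((\<lambda>i. g i t) ` I)"
  shows "\<forall>\<^sub>F s in nhds t. Min ((\<lambda>i. g i s) ` I) = Min ((\<lambda>i. g i s) ` {i \<in> I. g i t = g k t})"
proof -
  define A where "A = {i \<in> I. g i t = g k t}"
  have A: "finite A" "k \<in> A" "A \<subseteq> I" using I by (auto simp: A_def)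
  have "\<forall>\<^sub>F s in nhds t. \<forall>i\<in>I - A. g k s < g i s"
  proof (rule eventually_ball_finite)
    show "\<forall>i\<in>I - A. \<forall>\<^sub>F s in nhds t. g k s < g i s"
    proof
      fix i assume i: "i \<in> I - A"
      then have "g k t < g i t" using I k_min by (auto simp: A_def order.strict_iff_order)
      moreover have "isCont (\<lambda>s. g i s - g k s) t" using cont i I by (auto intro: continuous_intros)
      ultimately have "\<forall>\<^sub>F s in at t. 0 < g i s - g k s"
        by (intro order_tendstoD(1)[where a = 0]) (auto simp: isCont_def)
      then show "\<forall>\<^sub>F s in nhds t. g k s < g i s"
        unfolding eventually_nhds_conv_at using \<open>g k t < g i t\<close> by (auto elim: eventually_mono)
    qed
  qed (use I in simp)
  then show ?thesis
    unfolding A_def[symmetric]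
  proof (rule eventually_mono)
    fix s assume inactive: "\<forall>i\<in>I - A. g k s < g i s"
    have "Min ((\<lambda>i. g i s) ` I) \<in> (\<lambda>i. g i s) ` I" using I by (intro Min_in) auto
    then obtain j where j: "j \<in> I" "Min ((\<lambda>i. g i s) ` I) = g j s" by auto
    have "Min ((\<lambda>i. g i s) ` A) \<le> g j s"
    proof (cases "j \<in> A")
      case False
      then have "g k s < g j s" using inactive j by auto
      moreover have "Min ((\<lambda>i. g i s) ` A) \<le> g k s" using A by (intro Min_le) auto
      ultimately show ?thesis by simp
    qed (use A in auto)
    moreover have "Min ((\<lambda>i. g i s) ` I) \<le> Min ((\<lambda>i. g i s) ` A)"
      using A I by (intro Min_antimono) auto
    ultimately show "Min ((\<lambda>i. g i s) ` I) = Min ((\<lambda>i. g i s) ` A)" using j by simp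
  qed
qed

lemma DERIV_Min_active:
  fixes g :: "'i \<Rightarrow> real \<Rightarrow> real"
  assumes I: "finite I" "k \<in> I" and der: "\<And>i. i \<in> I \<Longrightarrow> (g i has_real_derivative D i) (at t)"
    and k_min: "g k t = Min ((\<lambda>i. g i t) ` I)"
    and same_slope: "\<And>i. i \<in> I \<Longrightarrow> g i t = g k t \<Longrightarrow> D i = D k"
  shows "((\<lambda>s. Min ((\<lambda>i. g i s) ` I)) has_real_derivative D k) (at t)"
proof -
  have active: "((\<lambda>s. Min ((\<lambda>i. g i s) ` {i \<in> I. g i t = g k t})) has_real_derivative D k) (at t)"
  proof (rule DERIV_Min_common[where c = "g k t"])
    fix i assume "i \<in> {i \<in> I. g i t = g k t}"
    then show "(g i has_real_derivative D k) (at t)" using der[of i] same_slope[of i] by simp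
  qed (use I in auto)
  have "\<forall>\<^sub>F s in nhds t. Min ((\<lambda>i. g i s) ` I) = Min ((\<lambda>i. g i s) ` {i \<in> I. g i t = g k t})"
    using I DERIV_isCont[OF der] k_min by (rule eventually_Min_eq_Min_active)
  from DERIV_cong_ev[OF refl this refl, THEN iffD2, OF active] show ?thesis .
qed

lemma countable_discrete:
  fixes S :: "'a::second_countable_topology set"
  assumes "discrete S"
  shows "countable S"
proof -
  obtain \<B> :: "'a set set" where \<B>: "countable \<B>" "\<And>T. open T \<Longrightarrow> \<exists>U. U \<subseteq> \<B> \<and> T = \<Union>U"
    using univ_second_countable by metis
  have isolating: "\<forall>x\<in>S. \<exists>C. C \<in> \<B> \<and> C \<inter> S = {x}"
  proof
    fix x assume xS: "x \<in> S"
    obtain T where "open T" "T \<inter> S = {x}"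
      using discreteD[OF assms xS] by (auto elim: isolated_inE)
    moreover obtain U where "U \<subseteq> \<B>" "T = \<Union>U" using \<B>(2) \<open>open T\<close> by blast
    moreover have "x \<in> T" using \<open>T \<inter> S = {x}\<close> by blast
    ultimately obtain C where "C \<in> \<B>" "x \<in> C" "C \<subseteq> T" by blast
    then show "\<exists>C. C \<in> \<B> \<and> C \<inter> S = {x}" using \<open>T \<inter> S = {x}\<close> xS by (intro exI[of _ C]) auto
  qed
  from bchoice[OF isolating] obtain C where C: "\<forall>x\<in>S. C x \<in> \<B> \<and> C x \<inter> S = {x}" by blast
  have "inj_on C S"
  proof (rule inj_onI)
    fix x y assume "x \<in> S" "y \<in> S" "C x = C y"
    then have "{x} = {y}" using C by metis
    then show "x = y" by simp
  qed
  moreover have "C ` S \<subseteq> \<B>" using C by blast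
  ultimately show ?thesis
    using countable_image_inj_on countable_subset[OF _ \<B>(1)] by metis
qed

lemma countable_nondegenerate_zeros:
  fixes f :: "real \<Rightarrow> real"
  shows "countable {s. f s = 0 \<and> (\<exists>D. D \<noteq> 0 \<and> (f has_real_derivative D) (at s))}"
    (is "countable ?Z")
proof (intro countable_discrete discreteI)
  fix s assume "s \<in> ?Z"
  then obtain D where "f s = 0" "D \<noteq> 0" "((\<lambda>y. (f y - f s) / (y - s)) \<longlongrightarrow> D) (at s)"
    by (auto simp: has_field_derivative_iff)
  then have "\<forall>\<^sub>F y in at s. (f y - f s) / (y - s) \<noteq> 0"
    by (intro tendsto_imp_eventually_ne)
  then have "\<forall>\<^sub>F y in at s. y \<notin> ?Z"
    by (rule eventually_mono) (use \<open>f s = 0\<close> in auto)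
  then show "s isolated_in ?Z" using \<open>s \<in> ?Z\<close> by (simp add: isolated_in_altdef)
qed

lemma DERIV_Min_off_countable:
  fixes g D :: "'i \<Rightarrow> real \<Rightarrow> real"
  assumes I: "finite I" "I \<noteq> {}"
    and der: "\<And>i s. i \<in> I \<Longrightarrow> s \<in> S \<Longrightarrow> (g i has_real_derivative D i s) (at s)"
  obtains N where "countable N"
    "\<And>s. s \<in> S - N \<Longrightarrow> \<exists>k\<in>I. ((\<lambda>s. Min ((\<lambda>i. g i s) ` I)) has_real_derivative D k s) (at s)"
proof
  \<comment> \<open>Two of the functions can only cross with different slopes at isolated points.\<close>
  define N where "N = (\<Union>i\<in>I. \<Union>j\<in>I. {s. g i s - g j s = 0 \<and>
      (\<exists>r. r \<noteq> 0 \<and> ((\<lambda>s. g i s - g j s) has_real_derivative r) (at s))})"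
  show "countable N"
    unfolding N_def by (intro countable_UN[OF countable_finite[OF I(1)]] countable_nondegenerate_zeros)
  fix s assume s: "s \<in> S - N"
  have "Min ((\<lambda>i. g i s) ` I) \<in> (\<lambda>i. g i s) ` I" using I by (intro Min_in) auto
  then obtain k where k: "k \<in> I" "g k s = Min ((\<lambda>i. g i s) ` I)" by auto
  have "((\<lambda>s. Min ((\<lambda>i. g i s) ` I)) has_real_derivative D k s) (at s)"
  proof (rule DERIV_Min_active[where g = g and D = "\<lambda>i. D i s", OF I(1) k(1) _ k(2)])
    show "(g i has_real_derivative D i s) (at s)" if "i \<in> I" for i using der that s by simp
    show "D i s = D k s" if i: "i \<in> I" "g i s = g k s" for i
    proof (rule ccontr)
      assume "D i s \<noteq> D k s"
      moreover have "((\<lambda>s. g i s - g k s) has_real_derivative D i s - D k s) (at s)"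
        using i k s by (intro DERIV_diff der) auto
      ultimately have "s \<in> {s. g i s - g k s = 0 \<and>
          (\<exists>r. r \<noteq> 0 \<and> ((\<lambda>s. g i s - g k s) has_real_derivative r) (at s))}"
        using i(2) by (intro CollectI conjI exI[of _ "D i s - D k s"]) auto
      then show False using i(1) k(1) s unfolding N_def by blast
    qed
  qed
  then show "\<exists>k\<in>I. ((\<lambda>s. Min ((\<lambda>i. g i s) ` I)) has_real_derivative D k s) (at s)"
    using k(1) by blast
qed

section \<open>Convexity, projections and the energy inequality\<close>

lemma DERIV_gradient_chain:
  fixes F :: "'a::real_inner \<Rightarrow> real"
  assumes "(F has_derivative (\<lambda>h. G \<bullet> h)) (at (X t))" "(X has_vector_derivative V) (at t within S)"
  shows "((\<lambda>s. F (X s)) has_real_derivative G \<bullet> V) (at t within S)"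
proof -
  have "(X has_derivative (\<lambda>h. h *\<^sub>R V)) (at t within S)"
    using assms(2) by (simp add: has_vector_derivative_def)
  from diff_chain_within[OF this has_derivative_at_withinI[OF assms(1)]]
  have "((\<lambda>s. F (X s)) has_derivative (\<lambda>h. G \<bullet> (h *\<^sub>R V))) (at t within S)" by (simp add: o_def)
  moreover have "(\<lambda>h. G \<bullet> (h *\<^sub>R V)) = (*) (G \<bullet> V)" by (auto simp: mult.commute)
  ultimately show ?thesis by (simp add: has_field_derivative_def)
qed

lemma convex_on_gradient_inequality:
  fixes F :: "'a::real_inner \<Rightarrow> real"
  assumes cvx: "convex_on UNIV F" and der: "(F has_derivative (\<lambda>h. G \<bullet> h)) (at y)"
  shows "F y + G \<bullet> (z - y) \<le> F z"
proof -
  define d where "d = z - y"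
  have "((\<lambda>\<theta>. y + \<theta> *\<^sub>R d) has_vector_derivative d) (at 0)"
    by (auto intro!: derivative_eq_intros)
  with der have "((\<lambda>\<theta>. F (y + \<theta> *\<^sub>R d)) has_real_derivative G \<bullet> d) (at 0)"
    by (intro DERIV_gradient_chain) simp_all
  then have "((\<lambda>\<theta>. (F (y + \<theta> *\<^sub>R d) - F y) / \<theta>) \<longlongrightarrow> G \<bullet> d) (at_right 0)"
    by (auto simp: has_field_derivative_iff intro: tendsto_mono[OF at_le])
  moreover have "\<forall>\<^sub>F \<theta> in at_right 0. (F (y + \<theta> *\<^sub>R d) - F y) / \<theta> \<le> F z - F y"
  proof (rule eventually_mono[OF eventually_at_right_real[of 0 1]])
    fix \<theta> :: real assume \<theta>: "\<theta> \<in> {0<..<1}"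
    have "F ((1 - \<theta>) *\<^sub>R y + \<theta> *\<^sub>R z) \<le> (1 - \<theta>) * F y + \<theta> * F z"
      using cvx \<theta> by (intro convex_onD) auto
    moreover have "y + \<theta> *\<^sub>R d = (1 - \<theta>) *\<^sub>R y + \<theta> *\<^sub>R z" by (simp add: d_def algebra_simps)
    ultimately show "(F (y + \<theta> *\<^sub>R d) - F y) / \<theta> \<le> F z - F y"
      using \<theta> by (simp add: divide_le_eq) (simp add: algebra_simps)
  qed simp
  ultimately have "G \<bullet> d \<le> F z - F y"
    by (intro tendsto_le[OF _ tendsto_const]) simp_all
  then show ?thesis by (simp add: d_def)
qed

lemma has_real_derivative_norm_power2:
  fixes U :: "real \<Rightarrow> 'a::real_inner"
  assumes "(U has_vector_derivative U') (at t)"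
  shows "((\<lambda>s. (norm (U s))\<^sup>2) has_real_derivative 2 * (U t \<bullet> U')) (at t)"
proof -
  have U: "(U has_derivative (\<lambda>h. h *\<^sub>R U')) (at t)"
    using assms by (simp add: has_vector_derivative_def)
  have "(\<lambda>h. U t \<bullet> (h *\<^sub>R U') + (h *\<^sub>R U') \<bullet> U t) = (*) (2 * (U t \<bullet> U'))"
    by (auto simp: inner_commute algebra_simps)
  with has_derivative_inner[OF U U] show ?thesis
    by (simp add: has_field_derivative_def power2_norm_eq_inner)
qed

lemma proj_in_and_obtuse:
  fixes K :: "'a::real_inner set"
  assumes "compact K" "convex K" "K \<noteq> {}"
  shows "proj K y \<in> K" "\<And>u. u \<in> K \<Longrightarrow> (y - proj K y) \<bullet> (u - proj K y) \<le> 0"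
proof -
  have "\<exists>w\<in>K. \<forall>u\<in>K. (norm (w - y))\<^sup>2 \<le> (norm (u - y))\<^sup>2"
    using assms by (intro continuous_attains_inf continuous_intros) auto
  then have "\<exists>w. w \<in> K \<and> (\<forall>u\<in>K. (norm (w - y))\<^sup>2 \<le> (norm (u - y))\<^sup>2)" by blast
  from someI_ex[OF this]
  have "proj K y \<in> K \<and> (\<forall>u\<in>K. (norm (proj K y - y))\<^sup>2 \<le> (norm (u - y))\<^sup>2)"
    unfolding proj_def .
  then have "proj K y \<in> K" and closest: "\<forall>u\<in>K. dist y (proj K y) \<le> dist y u"
    by (auto simp: dist_norm norm_minus_commute power2_le_iff_abs_le)
  then show "proj K y \<in> K" by blast
  show "(y - proj K y) \<bullet> (u - proj K y) \<le> 0" if "u \<in> K" for u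
    using any_closest_point_dot[OF assms(2) compact_imp_closed[OF assms(1)] \<open>proj K y \<in> K\<close> that closest] .
qed

lemma proj_translated_eqE:
  fixes C :: "'a::real_inner set"
  assumes C: "compact C" "convex C" "C \<noteq> {}" and "\<beta> > 0"
    and eq: "\<beta> *\<^sub>R v + proj ((\<lambda>c. c + a) ` C) 0 = 0"
  obtains c where "c \<in> C" "a = - \<beta> *\<^sub>R v - c" "\<And>c'. c' \<in> C \<Longrightarrow> v \<bullet> (c' - c) \<le> 0"
proof -
  define K where "K = (\<lambda>c. c + a) ` C"
  have K_eq: "K = (+) a ` C" by (auto simp: K_def add.commute)
  have K: "compact K" "convex K" "K \<noteq> {}"
    using C unfolding K_eq by (auto intro: compact_translation convex_translation)
  have p: "proj K 0 = - \<beta> *\<^sub>R v" using eq by (simp add: K_def eq_neg_iff_add_eq_0 add.commute)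
  obtain c where c: "c \<in> C" "proj K 0 = c + a" using proj_in_and_obtuse(1)[OF K] by (auto simp: K_def)
  show ?thesis
  proof (rule that[OF c(1)])
    show "a = - \<beta> *\<^sub>R v - c" using c(2) p by (metis add_diff_cancel_left' add.commute)
    fix c' assume "c' \<in> C"
    then have obtuse: "(0 - proj K 0) \<bullet> (c' + a - proj K 0) \<le> 0"
      by (intro proj_in_and_obtuse(2)[OF K]) (simp add: K_def)
    have "0 - proj K 0 = \<beta> *\<^sub>R v" using p by simp
    moreover have "c' + a - proj K 0 = c' - c" using c(2) by simp
    ultimately have "(\<beta> *\<^sub>R v) \<bullet> (c' - c) \<le> 0" using obtuse by metis
    then have "\<beta> * (v \<bullet> (c' - c)) \<le> 0" by simp
    then show "v \<bullet> (c' - c) \<le> 0" using \<open>\<beta> > 0\<close> by (simp add: mult_le_0_iff)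
  qed
qed

lemma lyapunov_derivative_le:
  fixes X V c :: "'a::real_inner"
  assumes "s > 0" "lam \<ge> 0" "\<xi> = lam * (\<alpha> - 1 - lam)"
    and slope: "\<phi>' \<le> V \<bullet> c" and level: "\<phi> \<le> X \<bullet> c"
  shows "2 * s * \<phi> + s\<^sup>2 * \<phi>' + (lam *\<^sub>R X + s *\<^sub>R V) \<bullet> ((lam + 1) *\<^sub>R V + s *\<^sub>R (- (\<alpha> / s) *\<^sub>R V - c))
           + \<xi> * (X \<bullet> V)
         \<le> (2 - lam) * s * \<phi> - (\<alpha> - lam - 1) * s * (norm V)\<^sup>2"
proof -
  have U': "(lam + 1) *\<^sub>R V + s *\<^sub>R (- (\<alpha> / s) *\<^sub>R V - c) = (lam + 1 - \<alpha>) *\<^sub>R V - s *\<^sub>R c"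
    using \<open>s > 0\<close> by (simp add: algebra_simps)
  \<comment> \<open>The choice of \<open>\<xi>\<close> cancels the cross term \<open>X \<bullet> V\<close>.\<close>
  have "2 * s * \<phi> + s\<^sup>2 * \<phi>' + (lam *\<^sub>R X + s *\<^sub>R V) \<bullet> ((lam + 1) *\<^sub>R V + s *\<^sub>R (- (\<alpha> / s) *\<^sub>R V - c))
        + \<xi> * (X \<bullet> V)
      = 2 * s * \<phi> + s\<^sup>2 * (\<phi>' - V \<bullet> c) - lam * s * (X \<bullet> c) - (\<alpha> - lam - 1) * s * (V \<bullet> V)"
    unfolding U' assms(3) by (simp add: inner_simps inner_commute algebra_simps power2_eq_square)
  also have "\<dots> \<le> 2 * s * \<phi> - lam * s * \<phi> - (\<alpha> - lam - 1) * s * (V \<bullet> V)"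
    using slope level \<open>s > 0\<close> \<open>lam \<ge> 0\<close>
    by (intro diff_mono add_left_mono order_refl mult_left_mono diff_right_mono)
      (auto simp: mult_nonneg_nonpos)
  finally show ?thesis by (simp add: dot_square_norm algebra_simps)
qed

section \<open>The energy along a solution\<close>

lemma compact_Cgrad: "compact (Cgrad m df y)"
  unfolding Cgrad_def by (intro finite_imp_compact_convex_hull) auto

lemma convex_Cgrad: "convex (Cgrad m df y)"
  unfolding Cgrad_def by simp

lemma Cgrad_nonempty: "0 < m \<Longrightarrow> Cgrad m df y \<noteq> {}"
  unfolding Cgrad_def by auto

lemma gradient_in_Cgrad: "k < m \<Longrightarrow> df k y \<in> Cgrad m df y"
  unfolding Cgrad_def by (intro hull_inc) auto

locale multiobjective_damped_solution =
  fixes f :: "nat \<Rightarrow> 'a::{real_inner,complete_space} \<Rightarrow> real"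
    and df :: "nat \<Rightarrow> 'a \<Rightarrow> 'a"
    and m :: nat and \<alpha> t0 :: real and x0 v0 :: 'a
    and x xd xdd :: "real \<Rightarrow> 'a"
  assumes m: "0 < m"
    and convex: "\<And>i. i < m \<Longrightarrow> convex_on UNIV (f i)"
    and grad: "\<And>i y. i < m \<Longrightarrow> (f i has_derivative (\<lambda>h. df i y \<bullet> h)) (at y)"
    and grad_cont: "\<And>i. i < m \<Longrightarrow> continuous_on UNIV (df i)"
    and \<alpha>: "\<alpha> > 0" and t0: "t0 > 0"
    and sol: "is_solution \<alpha> m df t0 x0 v0 x xd xdd"
begin

definition min_gap :: "'a \<Rightarrow> real \<Rightarrow> real" where
  "min_gap z t = Min ((\<lambda>i. f i (x t) - f i z) ` {..<m})"

lemma x_has_vector_derivative_within: "t0 \<le> t \<Longrightarrow> (x has_vector_derivative xd t) (at t within {t0..})"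
  using sol by (simp add: is_solution_def)

lemma x_has_vector_derivative:
  assumes "t0 < t"
  shows "(x has_vector_derivative xd t) (at t)"
proof -
  have "(x has_vector_derivative xd t) (at t within {t0<..})"
    by (rule has_vector_derivative_within_subset[OF x_has_vector_derivative_within]) (use assms in auto)
  then show ?thesis using assms by (subst (asm) has_vector_derivative_within_open) auto
qed

lemma continuous_on_x: "continuous_on {t0..} x"
  using x_has_vector_derivative_within
  by (auto simp: continuous_on_eq_continuous_within intro: has_vector_derivative_continuous)

lemma continuous_on_xd: "continuous_on {t0..} xd"
  using sol by (simp add: is_solution_def)

lemma xd_has_integral: "t0 \<le> t \<Longrightarrow> (xdd has_integral (xd t - xd t0)) {t0..t}"
  using sol unfolding is_solution_def by blast

lemma norm_xdd_integrable: "t0 \<le> t \<Longrightarrow> (\<lambda>s. norm (xdd s)) integrable_on {t0..t}"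
  using sol by (simp add: is_solution_def)

lemma objective_has_real_derivative:
  assumes "i < m" "(x has_vector_derivative xd t) (at t within S)"
  shows "((\<lambda>s. f i (x s)) has_real_derivative df i (x t) \<bullet> xd t) (at t within S)"
  using grad[OF assms(1)] assms(2) by (rule DERIV_gradient_chain)

lemma Min_gap_le_inner_Cgrad:
  assumes "c \<in> Cgrad m df y"
  shows "Min ((\<lambda>i. f i y - f i z) ` {..<m}) \<le> (y - z) \<bullet> c"
proof -
  have "df i y \<in> {v. Min ((\<lambda>i. f i y - f i z) ` {..<m}) \<le> (y - z) \<bullet> v}" if "i < m" for i
  proof -
    have "f i y + df i y \<bullet> (z - y) \<le> f i z"
      by (rule convex_on_gradient_inequality[OF convex[OF that] grad[OF that]])
    moreover have "Min ((\<lambda>i. f i y - f i z) ` {..<m}) \<le> f i y - f i z" using that by simp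
    ultimately show ?thesis by (simp add: inner_diff_left inner_diff_right inner_commute)
  qed
  then have "Cgrad m df y \<subseteq> {v. Min ((\<lambda>i. f i y - f i z) ` {..<m}) \<le> (y - z) \<bullet> v}"
    unfolding Cgrad_def by (intro hull_minimal convex_halfspace_ge) auto
  then show ?thesis using assms by auto
qed

lemma min_gap_has_real_derivative_ae:
  "AE s in lborel. t0 < s \<longrightarrow> (\<exists>k<m. (min_gap z has_real_derivative df k (x s) \<bullet> xd s) (at s))"
proof -
  have der: "((\<lambda>s. f i (x s) - f i z) has_real_derivative df i (x s) \<bullet> xd s) (at s)"
    if "i \<in> {..<m}" "s \<in> {t0<..}" for i s
    using that DERIV_diff[OF objective_has_real_derivative[of i s UNIV] DERIV_const[of "f i z"]]
      x_has_vector_derivative[of s] by simp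
  obtain N where "countable N" and N: "\<And>s. s \<in> {t0<..} - N \<Longrightarrow> \<exists>k\<in>{..<m}.
      ((\<lambda>s. Min ((\<lambda>i. f i (x s) - f i z) ` {..<m})) has_real_derivative df k (x s) \<bullet> xd s) (at s)"
  proof (rule DERIV_Min_off_countable[where I = "{..<m}" and S = "{t0<..}"
        and g = "\<lambda>i s. f i (x s) - f i z" and D = "\<lambda>i s. df i (x s) \<bullet> xd s"])
    show "{..<m} \<noteq> {}" using m by auto
  qed (use der that in auto)
  have "AE s in lborel. s \<notin> N"
    by (rule AE_not_in[OF countable_imp_null_set_lborel[OF \<open>countable N\<close>]])
  then show ?thesis
  proof eventually_elim
    case (elim s)
    show ?case
    proof
      assume "t0 < s"
      with N[of s] elim obtain k where "k < m"
        "((\<lambda>s. Min ((\<lambda>i. f i (x s) - f i z) ` {..<m})) has_real_derivative df k (x s) \<bullet> xd s) (at s)"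
        by auto
      then show "\<exists>k<m. (min_gap z has_real_derivative df k (x s) \<bullet> xd s) (at s)"
        unfolding min_gap_def[abs_def] by blast
    qed
  qed
qed

lemma acceleration_ae:
  "AE s in lborel. t0 < s \<longrightarrow> (\<exists>c\<in>Cgrad m df (x s).
     xdd s = - (\<alpha> / s) *\<^sub>R xd s - c \<and> (\<forall>c'\<in>Cgrad m df (x s). xd s \<bullet> (c' - c) \<le> 0))"
proof -
  have "AE s in lborel. t0 < s \<longrightarrow>
      (\<alpha> / s) *\<^sub>R xd s + proj ((\<lambda>c. c + xdd s) ` Cgrad m df (x s)) 0 = 0"
    using sol unfolding is_solution_def by blast
  then show ?thesis
  proof eventually_elim
    case (elim s)
    show ?case
    proof
      assume "t0 < s"
      then have "\<alpha> / s > 0" using \<alpha> t0 by simp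
      moreover have "(\<alpha> / s) *\<^sub>R xd s + proj ((\<lambda>c. c + xdd s) ` Cgrad m df (x s)) 0 = 0"
        using elim \<open>t0 < s\<close> by simp
      ultimately obtain c where "c \<in> Cgrad m df (x s)" "xdd s = - (\<alpha> / s) *\<^sub>R xd s - c"
          "\<And>c'. c' \<in> Cgrad m df (x s) \<Longrightarrow> xd s \<bullet> (c' - c) \<le> 0"
        using proj_translated_eqE[OF compact_Cgrad convex_Cgrad Cgrad_nonempty[OF m]] by blast
      then show "\<exists>c\<in>Cgrad m df (x s). xdd s = - (\<alpha> / s) *\<^sub>R xd s - c \<and>
          (\<forall>c'\<in>Cgrad m df (x s). xd s \<bullet> (c' - c) \<le> 0)" by blast
    qed
  qed
qed

lemma energy_eq:
  "energy m f x xd z lam \<xi> t = t\<^sup>2 * min_gap z t + 1/2 * (norm (lam *\<^sub>R (x t - z) + t *\<^sub>R xd t))\<^sup>2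
     + \<xi>/2 * (norm (x t - z))\<^sup>2"
  by (simp add: energy_def min_gap_def)

lemma energy_has_real_derivative:
  assumes "t0 < s" and gap': "(min_gap z has_real_derivative \<phi>') (at s)"
    and xdd: "(xd has_vector_derivative xdd s) (at s)"
  shows "(energy m f x xd z lam \<xi> has_real_derivative
      2 * s * min_gap z s + s\<^sup>2 * \<phi>' + (lam *\<^sub>R (x s - z) + s *\<^sub>R xd s) \<bullet> ((lam + 1) *\<^sub>R xd s + s *\<^sub>R xdd s)
      + \<xi> * ((x s - z) \<bullet> xd s)) (at s)"
proof -
  have X: "((\<lambda>r. x r - z) has_vector_derivative xd s) (at s)"
    using x_has_vector_derivative[OF assms(1)] by (intro derivative_eq_intros) auto
  have "((\<lambda>r. lam *\<^sub>R (x r - z) + r *\<^sub>R xd r) has_vector_derivative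
      lam *\<^sub>R xd s + (s *\<^sub>R xdd s + 1 *\<^sub>R xd s)) (at s)"
    using has_vector_derivative_scaleR[OF DERIV_const X, of lam] has_vector_derivative_scaleR[OF DERIV_ident xdd]
    by (intro has_vector_derivative_add) simp_all
  then have U: "((\<lambda>r. lam *\<^sub>R (x r - z) + r *\<^sub>R xd r) has_vector_derivative
      (lam + 1) *\<^sub>R xd s + s *\<^sub>R xdd s) (at s)"
    by (simp add: algebra_simps)
  have "((\<lambda>r. r\<^sup>2 * min_gap z r + 1/2 * (norm (lam *\<^sub>R (x r - z) + r *\<^sub>R xd r))\<^sup>2
      + \<xi>/2 * (norm (x r - z))\<^sup>2) has_real_derivative
      s\<^sup>2 * \<phi>' + 2 * s * min_gap z s
      + 1/2 * (2 * ((lam *\<^sub>R (x s - z) + s *\<^sub>R xd s) \<bullet> ((lam + 1) *\<^sub>R xd s + s *\<^sub>R xdd s)))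
      + \<xi>/2 * (2 * ((x s - z) \<bullet> xd s))) (at s)"
    using DERIV_mult'[OF DERIV_pow[of 2 s, simplified] gap']
    by (intro DERIV_add DERIV_cmult has_real_derivative_norm_power2 U X) (simp add: algebra_simps)
  then show ?thesis
    unfolding energy_eq[abs_def] by (rule DERIV_cong) (simp add: algebra_simps)
qed

lemma energy_derivative_le_ae:
  assumes lam: "lam \<ge> 0" and \<xi>: "\<xi> = lam * (\<alpha> - 1 - lam)"
  shows "AE s in lborel. t0 \<le> s \<longrightarrow> (\<exists>E'. (energy m f x xd z lam \<xi> has_real_derivative E') (at s) \<and>
           E' \<le> (2 - lam) * s * min_gap z s - (\<alpha> - lam - 1) * s * (norm (xd s))\<^sup>2)"
proof -
  have "AE s in lborel. t0 \<le> s \<longrightarrow> (xd has_vector_derivative xdd s) (at s)"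
    using sol unfolding is_solution_def by blast
  with AE_lborel_singleton[of t0] min_gap_has_real_derivative_ae[of z] acceleration_ae
  show ?thesis
  proof eventually_elim
    case (elim s)
    show ?case
    proof
      assume "t0 \<le> s"
      with elim have "t0 < s" by simp
      then obtain k where k: "k < m" and gap': "(min_gap z has_real_derivative df k (x s) \<bullet> xd s) (at s)"
        using elim by blast
      obtain c where c: "c \<in> Cgrad m df (x s)" "xdd s = - (\<alpha> / s) *\<^sub>R xd s - c"
        and obtuse: "\<forall>c'\<in>Cgrad m df (x s). xd s \<bullet> (c' - c) \<le> 0"
        using elim \<open>t0 < s\<close> by blast
      have slope: "df k (x s) \<bullet> xd s \<le> xd s \<bullet> c"
        using bspec[OF obtuse gradient_in_Cgrad[OF k, of df "x s"]] by (simp add: inner_diff_right inner_commute)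
      have level: "min_gap z s \<le> (x s - z) \<bullet> c"
        using Min_gap_le_inner_Cgrad[OF c(1)] by (simp add: min_gap_def)
      have "s > 0" using \<open>t0 < s\<close> t0 by simp
      have "(xd has_vector_derivative xdd s) (at s)" using elim \<open>t0 \<le> s\<close> by blast
      from energy_has_real_derivative[OF \<open>t0 < s\<close> gap' this, of lam \<xi>]
      show "\<exists>E'. (energy m f x xd z lam \<xi> has_real_derivative E') (at s) \<and>
          E' \<le> (2 - lam) * s * min_gap z s - (\<alpha> - lam - 1) * s * (norm (xd s))\<^sup>2"
        using lyapunov_derivative_le[OF \<open>s > 0\<close> lam \<xi> slope level] unfolding c(2) by blast
    qed
  qed
qed

lemma increments_dominated_on_min_gap:
  assumes "t0 \<le> T"
  shows "increments_dominated_on t0 T (min_gap z)"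
  unfolding min_gap_def[abs_def]
proof (rule increments_dominated_on_Min)
  fix i assume "i \<in> {..<m}"
  then have i: "i < m" by simp
  show "increments_dominated_on t0 T (\<lambda>s. f i (x s) - f i z)"
  proof (rule increments_dominated_on_vector_derivative)
    fix s assume "s \<in> {t0..T}"
    then have "(x has_vector_derivative xd s) (at s within {t0..T})"
      by (intro has_vector_derivative_within_subset[OF x_has_vector_derivative_within]) auto
    from DERIV_diff[OF objective_has_real_derivative[OF i this] DERIV_const[of "f i z"]]
    show "((\<lambda>s. f i (x s) - f i z) has_vector_derivative df i (x s) \<bullet> xd s) (at s within {t0..T})"
      by (simp add: has_real_derivative_iff_has_vector_derivative)
  next
    show "continuous_on {t0..T} (\<lambda>s. df i (x s) \<bullet> xd s)"
      using continuous_on_subset[OF continuous_on_x] continuous_on_subset[OF continuous_on_xd]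
      by (intro continuous_on_inner continuous_on_compose2[OF grad_cont[OF i]]) auto
  qed
qed (use m in auto)

lemma increments_dominated_on_energy:
  assumes "t0 \<le> T"
  shows "increments_dominated_on t0 T (energy m f x xd z lam \<xi>)"
proof -
  have X: "increments_dominated_on t0 T (\<lambda>s. x s - z)"
  proof (rule increments_dominated_on_vector_derivative)
    show "((\<lambda>s. x s - z) has_vector_derivative xd s) (at s within {t0..T})" if "s \<in> {t0..T}" for s
      using that by (auto intro!: derivative_eq_intros
          has_vector_derivative_within_subset[OF x_has_vector_derivative_within])
    show "continuous_on {t0..T} xd" using continuous_on_subset[OF continuous_on_xd] by auto
  qed
  have V: "increments_dominated_on t0 T xd"
    by (rule increments_dominated_on_integral) (auto intro: xd_has_integral norm_xdd_integrable \<open>t0 \<le> T\<close>)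
  have id: "increments_dominated_on t0 T (\<lambda>s. s)"
    by (rule increments_dominated_on_lipschitz[of _ _ _ 1]) simp
  have U: "increments_dominated_on t0 T (\<lambda>s. lam *\<^sub>R (x s - z) + s *\<^sub>R xd s)"
    by (intro increments_dominated_on_add increments_dominated_on_linear[OF bounded_linear_scaleR_right] X
        increments_dominated_on_bilinear[OF bounded_bilinear_scaleR] id V)
  have energy: "energy m f x xd z lam \<xi> = (\<lambda>s. (s * s) * min_gap z s
      + 1/2 * ((lam *\<^sub>R (x s - z) + s *\<^sub>R xd s) \<bullet> (lam *\<^sub>R (x s - z) + s *\<^sub>R xd s))
      + \<xi>/2 * ((x s - z) \<bullet> (x s - z)))"
    by (simp add: energy_eq[abs_def] power2_eq_square dot_square_norm)
  show ?thesis
    unfolding energy by (intro increments_dominated_on_add increments_dominated_on_linear[OF bounded_linear_mult_right]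
        increments_dominated_on_bilinear[OF bounded_bilinear_mult] increments_dominated_on_bilinear[OF bounded_bilinear_inner]
        id increments_dominated_on_min_gap[OF assms] U X)
qed

lemma energy_increment_le:
  assumes lam: "lam \<ge> 0" and \<xi>: "\<xi> = lam * (\<alpha> - 1 - lam)" and T: "t0 \<le> T"
  shows "energy m f x xd z lam \<xi> T - energy m f x xd z lam \<xi> t0
    \<le> (2 - lam) * integral {t0..T} (\<lambda>s. s * min_gap z s)
       + integral {t0..T} (\<lambda>s. s * (lam + 1 - \<alpha>) * (norm (xd s))\<^sup>2)"
proof -
  define R1 where "R1 s = s * min_gap z s" for s
  define R2 where "R2 s = s * (lam + 1 - \<alpha>) * (norm (xd s))\<^sup>2" for s
  have R1: "continuous_on {t0..T} R1" unfolding R1_def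
    using increments_dominated_on_imp_continuous_on[OF increments_dominated_on_min_gap[OF T]]
    by (intro continuous_on_mult continuous_on_id)
  have R2: "continuous_on {t0..T} R2" unfolding R2_def
    using continuous_on_subset[OF continuous_on_xd] by (intro continuous_intros) auto
  have "energy m f x xd z lam \<xi> T - energy m f x xd z lam \<xi> t0
      \<le> integral {t0..T} (\<lambda>s. (2 - lam) * R1 s + R2 s)"
  proof (rule DERIV_le_ae_imp_increment_le[OF T increments_dominated_on_energy[OF T]])
    show "continuous_on {t0..T} (\<lambda>s. (2 - lam) * R1 s + R2 s)" by (intro continuous_intros R1 R2)
    show "AE s in lborel. s \<in> {t0..T} \<longrightarrow> (\<exists>D. (energy m f x xd z lam \<xi> has_real_derivative D) (at s)
        \<and> D \<le> (2 - lam) * R1 s + R2 s)"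
      using energy_derivative_le_ae[OF lam \<xi>, of z]
      by eventually_elim (auto simp: R1_def R2_def algebra_simps)
  qed
  also have "\<dots> = (2 - lam) * integral {t0..T} R1 + integral {t0..T} R2"
    using R1 R2 by (simp add: integral_add integrable_on_mult_right integrable_continuous_interval)
  finally show ?thesis by (simp add: R1_def[abs_def] R2_def[abs_def])
qed

end

theorem lemma4p13:
  fixes f :: "nat \<Rightarrow> 'a::{real_inner,complete_space} \<Rightarrow> real"
    and df :: "nat \<Rightarrow> 'a \<Rightarrow> 'a"
    and m :: nat and \<alpha> t0 lam \<xi> :: real and x0 v0 z :: 'a
    and x xd xdd :: "real \<Rightarrow> 'a"
  assumes m: "0 < m"
    and convex: "\<And>i. i < m \<Longrightarrow> convex_on UNIV (f i)"
    and grad: "\<And>i y. i < m \<Longrightarrow> (f i has_derivative (\<lambda>h. df i y \<bullet> h)) (at y)"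
    and grad_cont: "\<And>i. i < m \<Longrightarrow> continuous_on UNIV (df i)"
    and \<alpha>: "\<alpha> > 0" and t0: "t0 > 0"
    and sol: "is_solution \<alpha> m df t0 x0 v0 x xd xdd"
    and lam: "lam \<ge> 0" and \<xi>: "\<xi> = lam * (\<alpha> - 1 - lam)" and \<xi>_nonneg: "\<xi> \<ge> 0"
  shows "(AE t in lborel. t \<ge> t0 \<longrightarrow> energy m f x xd z lam \<xi> differentiable (at t))
    \<and> (AE t in lborel. t \<ge> t0 \<longrightarrow>
          deriv (energy m f x xd z lam \<xi>) t
            \<le> (2 - lam) * t * Min ((\<lambda>i. f i (x t) - f i z) ` {..<m})
               - (\<alpha> - lam - 1) * t * (norm (xd t))\<^sup>2)
    \<and> (\<forall>t\<ge>t0. energy m f x xd z lam \<xi> t - energy m f x xd z lam \<xi> t0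
          \<le> (2 - lam) * integral {t0..t} (\<lambda>s. s * Min ((\<lambda>i. f i (x s) - f i z) ` {..<m}))
             + integral {t0..t} (\<lambda>s. s * (lam + 1 - \<alpha>) * (norm (xd s))\<^sup>2))"
proof -
  interpret multiobjective_damped_solution f df m \<alpha> t0 x0 v0 x xd xdd
    using m convex grad grad_cont \<alpha> t0 sol by unfold_locales
  note E' = energy_derivative_le_ae[OF lam \<xi>, of z, unfolded min_gap_def]
  have "AE t in lborel. t \<ge> t0 \<longrightarrow> energy m f x xd z lam \<xi> differentiable (at t)"
    using E' by eventually_elim (auto simp: real_differentiable_def)
  moreover have "AE t in lborel. t \<ge> t0 \<longrightarrow> deriv (energy m f x xd z lam \<xi>) t
      \<le> (2 - lam) * t * Min ((\<lambda>i. f i (x t) - f i z) ` {..<m}) - (\<alpha> - lam - 1) * t * (norm (xd t))\<^sup>2"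
    using E' by eventually_elim (auto dest: DERIV_imp_deriv)
  moreover note energy_increment_le[OF lam \<xi>, of _ z, unfolded min_gap_def]
  ultimately show ?thesis by blast
qed

end
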